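(* For all integers $a,b,c,d,e$: $$(F_{d-c}L_{e-b}-F_{e-c}L_{d-b})F_{c-a}=(F_{e-a}F_{d-c}-F_{d-a}F_{e-c})L_{c-b},$$ $$(J_{d-c}j_{e-b}-J_{e-c}j_{d-b})J_{c-a}=(J_{e-a}J_{d-c}-J_{d-a}J_{e-c})j_{c-b},$$ $$(P_{d-c}Q_{e-b}-P_{e-c}Q_{d-b})P_{c-a}=(P_{e-a}P_{d-c}-P_{d-a}P_{e-c})Q_{c-b}.$$
   Context: All sequences are indexed by $n\in\mathbb Z$. Fibonacci numbers $F_n$ and Lucas numbers $L_n$: $F_n=F_{n-1}+F_{n-2}$, $L_n=L_{n-1}+L_{n-2}$ for all $n\in\mathbb Z$, with $F_0=0,F_1=1,L_0=2,L_1=1$ (so $F_{-n}=(-1)^{n-1}F_n$, $L_{-n}=(-1)^nL_n$). Jacobsthal numbers $J_n$ and Jacobsthal–Lucas numbers $j_n$: $J_n=J_{n-1}+2J_{n-2}$, $j_n=j_{n-1}+2j_{n-2}$ for all $n\in\mathbb Z$, with $J_0=0,J_1=1,j_0=2,j_1=1$ (so $J_{-n}=(-1)^{n-1}2^{-n}J_n$, $j_{-n}=(-1)^n2^{-n}j_n$, rational for negative index). Pell numbers $P_n$ and Pell–Lucas numbers $Q_n$: $P_n=2P_{n-1}+P_{n-2}$, $Q_n=2Q_{n-1}+Q_{n-2}$ for all $n\in\mathbb Z$, with $P_0=0,P_1=1,Q_0=2,Q_1=2$ (so $P_{-n}=(-1)^{n-1}P_n$, $Q_{-n}=(-1)^nQ_n$).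 *)

theory Defs
  imports Complex_Main
begin

text \<open>Second-order linear recurrence x n = p * x (n-1) + q * x (n-2) (q nonzero),
  extended to all integer indices. fwd computes indices 0,1,2,...;
  bwd computes indices 0,-1,-2,... via x (n-2) = (x n - p * x (n-1)) / q.\<close>

fun fwd :: "real \<Rightarrow> real \<Rightarrow> real \<Rightarrow> real \<Rightarrow> nat \<Rightarrow> real" where
  "fwd p q x0 x1 0 = x0"
| "fwd p q x0 x1 (Suc 0) = x1"
| "fwd p q x0 x1 (Suc (Suc n)) = p * fwd p q x0 x1 (Suc n) + q * fwd p q x0 x1 n"

fun bwd :: "real \<Rightarrow> real \<Rightarrow> real \<Rightarrow> real \<Rightarrow> nat \<Rightarrow> real" where
  "bwd p q x0 x1 0 = x1"
| "bwd p q x0 x1 (Suc 0) = x0"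
| "bwd p q x0 x1 (Suc (Suc n)) = (bwd p q x0 x1 n - p * bwd p q x0 x1 (Suc n)) / q"
  \<comment> \<open>bwd k is the term of index 1 - k\<close>

definition recseq :: "real \<Rightarrow> real \<Rightarrow> real \<Rightarrow> real \<Rightarrow> int \<Rightarrow> real" where
  "recseq p q x0 x1 n = (if n \<ge> 0 then fwd p q x0 x1 (nat n) else bwd p q x0 x1 (nat (1 - n)))"

definition Fib :: "int \<Rightarrow> real" where "Fib = recseq 1 1 0 1"
definition Luc :: "int \<Rightarrow> real" where "Luc = recseq 1 1 2 1"
definition Jac :: "int \<Rightarrow> real" where "Jac = recseq 1 2 0 1"
definition JacL :: "int \<Rightarrow> real" where "JacL = recseq 1 2 2 1"
definition Pell :: "int \<Rightarrow> real" where "Pell = recseq 2 1 0 1"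
definition PellQ :: "int \<Rightarrow> real" where "PellQ = recseq 2 1 2 2"

end

theory Submission
  imports Defs
begin

text \<open>All six sequences are Lucas sequences: with \<open>\<alpha>, \<beta>\<close> the roots of \<open>x\<^sup>2 = p x + q\<close>,
  \<open>recseq p q 0 1 n = (\<alpha>\<^sup>n - \<beta>\<^sup>n) / (\<alpha> - \<beta>)\<close> and \<open>recseq p q 2 p n = \<alpha>\<^sup>n + \<beta>\<^sup>n\<close> for every
  integer \<open>n\<close> (Binet's formulas, which follow from uniqueness of solutions of the recurrence).
  After substituting these, each identity becomes a rational identity in \<open>\<alpha>\<close> and \<open>\<beta>\<close>,
  checked by clearing denominators.\<close>

lemma recseq_unique:
  assumes q: "q \<noteq> 0" and g0: "g 0 = x0" and g1: "g 1 = x1"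
    and rec: "\<And>n. g (n + 2) = p * g (n + 1) + q * g n"
  shows "recseq p q x0 x1 n = g n"
proof -
  have fwd: "fwd p q x0 x1 m = g (int m) \<and> fwd p q x0 x1 (Suc m) = g (int (Suc m))" for m
  proof (induction m)
    case 0
    then show ?case using g0 g1 by simp
  next
    case (Suc m)
    have "g (int (Suc (Suc m))) = p * g (int (Suc m)) + q * g (int m)"
      using rec[of "int m"] by (simp add: add.commute add.left_commute)
    with Suc show ?case by simp
  qed
  have bwd: "bwd p q x0 x1 m = g (1 - int m) \<and> bwd p q x0 x1 (Suc m) = g (1 - int (Suc m))" for m
  proof (induction m)
    case 0
    then show ?case using g0 g1 by simp
  next
    case (Suc m)
    have "g (1 - int m) = p * g (1 - int (Suc m)) + q * g (1 - int (Suc (Suc m)))"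
      using rec[of "1 - int (Suc (Suc m))"] by (simp add: algebra_simps)
    then have "g (1 - int (Suc (Suc m))) = (g (1 - int m) - p * g (1 - int (Suc m))) / q"
      using q by (simp add: field_simps)
    with Suc show ?case by simp
  qed
  show ?thesis
  proof (cases "n \<ge> 0")
    case True
    then show ?thesis using fwd[of "nat n"] by (simp add: recseq_def)
  next
    case False
    then show ?thesis using bwd[of "nat (1 - n)"] by (simp add: recseq_def)
  qed
qed

lemma power_int_characteristic_rec:
  fixes x :: real
  assumes "x \<noteq> 0" and "x\<^sup>2 = p * x + q"
  shows "x powi (n + 2) = p * x powi (n + 1) + q * x powi n"
proof -
  have "x powi (n + 2) = x powi n * x\<^sup>2"
    using assms(1) by (simp add: power_int_add)
  also have "\<dots> = p * (x powi n * x) + q * x powi n"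
    using assms(2) by (simp add: algebra_simps)
  also have "x powi n * x = x powi (n + 1)"
    using assms(1) by (simp add: power_int_add)
  finally show ?thesis .
qed

lemma recseq_binet:
  fixes \<alpha> \<beta> :: real
  assumes "q \<noteq> 0" and "\<alpha> + \<beta> = p" and "\<alpha> * \<beta> = - q"
    and "c1 + c2 = x0" and "c1 * \<alpha> + c2 * \<beta> = x1"
  shows "recseq p q x0 x1 n = c1 * \<alpha> powi n + c2 * \<beta> powi n"
proof (rule recseq_unique)
  have nonzero: "\<alpha> \<noteq> 0" "\<beta> \<noteq> 0"
    using assms(1,3) by auto
  have "\<alpha>\<^sup>2 = p * \<alpha> + q" "\<beta>\<^sup>2 = p * \<beta> + q"
    using assms(2,3) by (auto simp: power2_eq_square algebra_simps)
  with nonzero show "c1 * \<alpha> powi (n + 2) + c2 * \<beta> powi (n + 2)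
      = p * (c1 * \<alpha> powi (n + 1) + c2 * \<beta> powi (n + 1)) + q * (c1 * \<alpha> powi n + c2 * \<beta> powi n)"
    for n
    by (simp add: power_int_characteristic_rec algebra_simps)
qed (use assms in auto)

lemma recseq_0_1_binet:
  fixes \<alpha> \<beta> :: real
  assumes "q \<noteq> 0" and "\<alpha> + \<beta> = p" and "\<alpha> * \<beta> = - q" and "\<alpha> \<noteq> \<beta>"
  shows "recseq p q 0 1 n = (\<alpha> powi n - \<beta> powi n) / (\<alpha> - \<beta>)"
proof -
  have "\<alpha> - \<beta> \<noteq> 0"
    using assms(4) by simp
  then have "recseq p q 0 1 n = 1 / (\<alpha> - \<beta>) * \<alpha> powi n + - 1 / (\<alpha> - \<beta>) * \<beta> powi n"
    by (intro recseq_binet[OF assms(1-3)]) (auto simp: divide_simps)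
  then show ?thesis
    by (simp add: diff_divide_distrib)
qed

lemma recseq_2_p_binet:
  fixes \<alpha> \<beta> :: real
  assumes "q \<noteq> 0" and "\<alpha> + \<beta> = p" and "\<alpha> * \<beta> = - q"
  shows "recseq p q 2 p n = \<alpha> powi n + \<beta> powi n"
  using recseq_binet[OF assms, of 1 1 2 p n] assms(2) by simp

lemma powi_sum_difference_identity:
  fixes x y k :: real
  assumes "x \<noteq> 0" "y \<noteq> 0" "k \<noteq> 0"
  defines "U \<equiv> \<lambda>n. (x powi n - y powi n) / k" and "V \<equiv> \<lambda>n. x powi n + y powi n"
  shows "(U (d - c) * V (e - b) - U (e - c) * V (d - b)) * U (c - a)
           = (U (e - a) * U (d - c) - U (d - a) * U (e - c)) * V (c - b)"
  unfolding U_def V_def using assms by (simp add: power_int_diff field_simps)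

lemma lucas_sequences_identity:
  fixes p q :: real and a b c d e :: int
  assumes "q \<noteq> 0" and "p\<^sup>2 + 4 * q > 0"
  defines "U \<equiv> recseq p q 0 1" and "V \<equiv> recseq p q 2 p"
  shows "(U (d - c) * V (e - b) - U (e - c) * V (d - b)) * U (c - a)
           = (U (e - a) * U (d - c) - U (d - a) * U (e - c)) * V (c - b)"
proof -
  define \<alpha> where "\<alpha> = (p + sqrt (p\<^sup>2 + 4 * q)) / 2"
  define \<beta> where "\<beta> = (p - sqrt (p\<^sup>2 + 4 * q)) / 2"
  have sum: "\<alpha> + \<beta> = p"
    by (simp add: \<alpha>_def \<beta>_def field_simps)
  have prod: "\<alpha> * \<beta> = - q"
    using assms(2) by (simp add: \<alpha>_def \<beta>_def field_simps power2_eq_square)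
  have "\<alpha> \<noteq> \<beta>"
    using assms(2) by (simp add: \<alpha>_def \<beta>_def)
  then have "U = (\<lambda>n. (\<alpha> powi n - \<beta> powi n) / (\<alpha> - \<beta>))" "V = (\<lambda>n. \<alpha> powi n + \<beta> powi n)"
    using recseq_0_1_binet[OF assms(1) sum prod] recseq_2_p_binet[OF assms(1) sum prod]
    by (auto simp: U_def V_def)
  moreover have "\<alpha> \<noteq> 0" "\<beta> \<noteq> 0"
    using prod assms(1) by auto
  ultimately show ?thesis
    using powi_sum_difference_identity[of \<alpha> \<beta> "\<alpha> - \<beta>"] \<open>\<alpha> \<noteq> \<beta>\<close> by simp
qed

theorem corollary1:
  fixes a b c d e :: int
  shows "((Fib (d-c) * Luc (e-b) - Fib (e-c) * Luc (d-b)) * Fib (c-a)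
           = (Fib (e-a) * Fib (d-c) - Fib (d-a) * Fib (e-c)) * Luc (c-b)) \<and>
         ((Jac (d-c) * JacL (e-b) - Jac (e-c) * JacL (d-b)) * Jac (c-a)
           = (Jac (e-a) * Jac (d-c) - Jac (d-a) * Jac (e-c)) * JacL (c-b)) \<and>
         ((Pell (d-c) * PellQ (e-b) - Pell (e-c) * PellQ (d-b)) * Pell (c-a)
           = (Pell (e-a) * Pell (d-c) - Pell (d-a) * Pell (e-c)) * PellQ (c-b))"
  using lucas_sequences_identity[of 1 1] lucas_sequences_identity[of 2 1]
    lucas_sequences_identity[of 1 2]
  unfolding Fib_def Luc_def Jac_def JacL_def Pell_def PellQ_def
  by simp

end
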